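(* Let $m,n\in\mathbb{N}$ and for $1\le\ell\le m$ let $r_{\ell},s_{\ell}$ be nonnegative integers with $s_\ell+1\ge r_\ell$, and let $a_{1,\ell},\dots,a_{r_{\ell},\ell},b_{1,\ell},\dots,b_{s_{\ell},\ell}\in\mathbb{C}$ be such that \[ \frac{(a_{1,\ell})_{N}\cdots(a_{r_{\ell},\ell})_{N}}{(b_{1,\ell})_{N}\cdots(b_{s_{\ell},\ell})_{N}}\ge0\quad\text{for all }N\in\mathbb{N}_{0}. \] Let $z_{j,\ell}\in\mathbb{C}$ ($1\le j\le n$), where if $s_{\ell}+1=r_{\ell}$ we assume $|z_{j,\ell}|<1$ for all $j$. Then the $n\times n$ matrix \[ \left(\prod_{\ell=1}^{m}{}_{r_{\ell}}F_{s_{\ell}}\left(\begin{array}{c}a_{1,\ell},\dots,a_{r_{\ell},\ell}\\ b_{1,\ell},\dots,b_{s_{\ell},\ell}\end{array}\bigg|\,z_{j,\ell}\overline{z_{k,\ell}}\right)\right)_{j,k=1}^{n} \] is positive semidefinite.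
   Context: $(a)_N=\Gamma(a+N)/\Gamma(a)=a(a+1)\cdots(a+N-1)$. For $s+1\ge r$, ${}_{r}F_{s}\left(\begin{array}{c}a_{1},\dots,a_{r}\\ b_{1},\dots,b_{s}\end{array}\big|z\right)=\sum_{N=0}^{\infty}\frac{(a_1)_N\cdots(a_r)_N}{N!\,(b_1)_N\cdots(b_s)_N}z^{N}$, for $z\in\mathbb{C}$ if $s+1>r$ and $|z|<1$ if $s+1=r$. A complex matrix $A=(a_{j,k})$ is positive semidefinite if $\sum_{j,k}a_{j,k}w_j\overline{w_k}\ge0$ for all complex $w_j$. *)

theory Defs
  imports Complex_Main
begin

definition hypF :: "nat \<Rightarrow> nat \<Rightarrow> (nat \<Rightarrow> complex) \<Rightarrow> (nat \<Rightarrow> complex) \<Rightarrow> complex \<Rightarrow> complex" where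
  "hypF r s a b z =
     (\<Sum>N. (\<Prod>i=1..r. pochhammer (a i) N) / (fact N * (\<Prod>i=1..s. pochhammer (b i) N)) * z ^ N)"

definition nonneg_complex :: "complex \<Rightarrow> bool" where
  "nonneg_complex x \<longleftrightarrow> x \<in> \<real> \<and> 0 \<le> Re x"

definition psd_matrix :: "nat \<Rightarrow> (nat \<Rightarrow> nat \<Rightarrow> complex) \<Rightarrow> bool" where
  "psd_matrix n A \<longleftrightarrow>
     (\<forall>w :: nat \<Rightarrow> complex. nonneg_complex (\<Sum>j=1..n. \<Sum>k=1..n. A j k * w j * cnj (w k)))"

end

theory Submission
  imports Defs "HOL-Analysis.Analysis"
begin

text \<open>Each factor \<open>hypF\<close> is a power series in \<open>z\<^sub>j\<^sub>,\<^sub>l cnj(z\<^sub>k\<^sub>,\<^sub>l)\<close> with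
  nonnegative coefficients. Expanding the product of the partial sums over \<open>l\<close> writes the
  truncated matrix as a nonnegative combination of rank-one matrices \<open>u\<^sub>j cnj(u\<^sub>k)\<close> with
  \<open>u\<^sub>j = \<Prod>\<^sub>l z\<^sub>j\<^sub>,\<^sub>l ^ N\<^sub>l\<close>, hence positive semidefinite. The series converge by the
  ratio test, whose term ratio tends to \<open>0\<close> if \<open>r < s + 1\<close> and to \<open>1\<close> if \<open>r = s + 1\<close>,
  and positive semidefiniteness passes to entrywise limits since \<open>\<real>\<^sub>\<ge>\<^sub>0\<close> is closed.\<close>

lemma nonneg_complex_iff_nonneg_Reals: "nonneg_complex x \<longleftrightarrow> x \<in> \<real>\<^sub>\<ge>\<^sub>0"
  unfolding nonneg_complex_def complex_nonneg_Reals_iff complex_is_Real_iff by auto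

lemma psd_matrix_gram_sum:
  assumes "finite P" and "\<And>p. p \<in> P \<Longrightarrow> c p \<ge> 0"
  shows "psd_matrix n (\<lambda>j k. \<Sum>p\<in>P. complex_of_real (c p) * u p j * cnj (u p k))"
  unfolding psd_matrix_def
proof
  fix w :: "nat \<Rightarrow> complex"
  define S where "S p = (\<Sum>j=1..n. u p j * w j)" for p
  have "(\<Sum>j=1..n. \<Sum>k=1..n. (\<Sum>p\<in>P. complex_of_real (c p) * u p j * cnj (u p k)) * w j * cnj (w k))
      = (\<Sum>j=1..n. \<Sum>k=1..n. \<Sum>p\<in>P. complex_of_real (c p) * (u p j * w j) * cnj (u p k * w k))"
    (is "?Q = _")
    by (simp add: sum_distrib_left sum_distrib_right mult_ac)
  also have "\<dots> = (\<Sum>p\<in>P. \<Sum>j=1..n. \<Sum>k=1..n. complex_of_real (c p) * (u p j * w j) * cnj (u p k * w k))"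
    by (simp add: sum.swap[of _ P])
  also have "\<dots> = (\<Sum>p\<in>P. complex_of_real (c p) * (S p * cnj (S p)))"
    unfolding S_def cnj_sum sum_distrib_left sum_distrib_right
    by (rule sum.cong[OF refl], subst sum.swap) (simp add: mult_ac)
  also have "\<dots> = complex_of_real (\<Sum>p\<in>P. c p * (norm (S p))\<^sup>2)"
    by (simp add: complex_norm_square[symmetric])
  finally show "nonneg_complex ?Q"
    using assms(2) by (simp only: nonneg_complex_iff_nonneg_Reals nonneg_Reals_of_real_iff) (simp add: sum_nonneg)
qed

lemma psd_matrix_limit:
  assumes "\<And>j k. j \<in> {1..n} \<Longrightarrow> k \<in> {1..n} \<Longrightarrow> (\<lambda>M. A M j k) \<longlonglongrightarrow> B j k"
    and "\<And>M. psd_matrix n (A M)"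
  shows "psd_matrix n B"
  unfolding psd_matrix_def nonneg_complex_iff_nonneg_Reals
proof
  fix w :: "nat \<Rightarrow> complex"
  show "(\<Sum>j=1..n. \<Sum>k=1..n. B j k * w j * cnj (w k)) \<in> \<real>\<^sub>\<ge>\<^sub>0"
  proof (rule Lim_in_closed_set[OF closed_nonneg_Reals_complex])
    show "(\<lambda>M. \<Sum>j=1..n. \<Sum>k=1..n. A M j k * w j * cnj (w k))
        \<longlonglongrightarrow> (\<Sum>j=1..n. \<Sum>k=1..n. B j k * w j * cnj (w k))"
      by (intro tendsto_sum tendsto_mult tendsto_const assms(1)) auto
    show "\<forall>\<^sub>F M in sequentially. (\<Sum>j=1..n. \<Sum>k=1..n. A M j k * w j * cnj (w k)) \<in> \<real>\<^sub>\<ge>\<^sub>0"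
      using assms(2) by (simp add: psd_matrix_def nonneg_complex_iff_nonneg_Reals)
  qed simp
qed

text \<open>The Schur product theorem in the form needed: the product over \<open>L\<close> expands into a sum,
  over multi-indices \<open>g\<close>, of rank-one matrices built from \<open>\<Prod>\<^sub>l x\<^sub>j\<^sub>,\<^sub>l ^ g l\<close>.\<close>

lemma psd_matrix_prod_partial_sums:
  assumes "finite L" and "\<And>l N. l \<in> L \<Longrightarrow> d l N \<in> \<real>\<^sub>\<ge>\<^sub>0"
  shows "psd_matrix n (\<lambda>j k. \<Prod>l\<in>L. \<Sum>N<M. d l N * (x j l * cnj (x k l)) ^ N)"
proof -
  have d_eq: "complex_of_real (Re (d l N)) = d l N" if "l \<in> L" for l N
    using assms(2)[OF that] by (simp add: nonneg_Reals_Real)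
  have "(\<Prod>l\<in>L. \<Sum>N<M. d l N * (x j l * cnj (x k l)) ^ N)
      = (\<Sum>g\<in>PiE L (\<lambda>_. {..<M}). \<Prod>l\<in>L. d l (g l) * (x j l * cnj (x k l)) ^ g l)" for j k
    using assms(1) by (simp add: prod_sum_PiE)
  also have "\<dots> j k = (\<Sum>g\<in>PiE L (\<lambda>_. {..<M}).
      complex_of_real (\<Prod>l\<in>L. Re (d l (g l))) * (\<Prod>l\<in>L. x j l ^ g l) * cnj (\<Prod>l\<in>L. x k l ^ g l))" for j k
    by (intro sum.cong refl) (auto simp: d_eq prod.distrib power_mult_distrib intro!: prod.cong)
  finally show ?thesis
    using assms by (simp only:) (intro psd_matrix_gram_sum finite_PiE prod_nonneg; auto simp: complex_nonneg_Reals_iff)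
qed

lemma divide_power_cancel:
  fixes p q x :: "'a::field"
  assumes "x \<noteq> 0" and "s + 1 = r + e"
  shows "(p / x ^ r) / (q / x ^ s) * inverse x ^ e = p / (q * x)"
proof (cases "q = 0")
  case False
  have "x ^ s * x = x ^ r * x ^ e"
    using assms(2) by (metis power_Suc2 power_add Suc_eq_plus1)
  then show ?thesis
    using assms(1) False by (simp add: field_simps)
qed simp

lemma LIMSEQ_inverse_of_nat_add_one: "(\<lambda>N. inverse (of_nat N + 1 :: 'a::real_normed_field)) \<longlonglongrightarrow> 0"
  using LIMSEQ_Suc[OF lim_inverse_n] by (simp add: add.commute)

lemma LIMSEQ_shifted_ratio: "(\<lambda>N. (c + of_nat N) / (of_nat N + 1 :: 'a::real_normed_field)) \<longlonglongrightarrow> 1"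
proof -
  have "(\<lambda>N. 1 + (c - 1) * inverse (of_nat N + 1 :: 'a)) \<longlonglongrightarrow> 1 + (c - 1) * 0"
    by (intro tendsto_intros LIMSEQ_inverse_of_nat_add_one)
  moreover have "1 + (c - 1) * inverse (of_nat N + 1) = (c + of_nat N) / (of_nat N + 1 :: 'a)" for N
    using of_nat_neq_0[of N, where 'a='a] by (simp add: field_simps)
  ultimately show ?thesis by simp
qed

lemma summable_ratio_tendsto:
  fixes f q :: "nat \<Rightarrow> 'a::{banach, real_normed_div_algebra}"
  assumes "\<And>N. f (Suc N) = f N * q N" and "q \<longlonglongrightarrow> L" and "norm L < 1"
  shows "summable f"
proof -
  define c where "c = (1 + norm L) / 2"
  have "(\<lambda>N. norm (q N)) \<longlonglongrightarrow> norm L"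
    using assms(2) by (rule tendsto_norm)
  moreover have "norm L < c" using assms(3) by (simp add: c_def)
  ultimately obtain N0 where "\<And>N. N \<ge> N0 \<Longrightarrow> norm (q N) < c"
    by (metis (mono_tags) eventually_sequentially order_tendstoD(2))
  then have "\<And>N. N \<ge> N0 \<Longrightarrow> norm (f (Suc N)) \<le> c * norm (f N)"
    by (simp add: assms(1) norm_mult) (metis mult.commute mult_left_mono norm_ge_zero less_imp_le)
  moreover have "c < 1" using assms(3) by (simp add: c_def)
  ultimately show ?thesis by (metis summable_ratio_test)
qed

definition hypF_coeff :: "nat \<Rightarrow> nat \<Rightarrow> (nat \<Rightarrow> complex) \<Rightarrow> (nat \<Rightarrow> complex) \<Rightarrow> nat \<Rightarrow> complex" where
  "hypF_coeff r s a b N = (\<Prod>i=1..r. pochhammer (a i) N) / (fact N * (\<Prod>i=1..s. pochhammer (b i) N))"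

definition hypF_term_ratio :: "nat \<Rightarrow> nat \<Rightarrow> (nat \<Rightarrow> complex) \<Rightarrow> (nat \<Rightarrow> complex) \<Rightarrow> nat \<Rightarrow> complex" where
  "hypF_term_ratio r s a b N =
     (\<Prod>i=1..r. a i + of_nat N) / ((\<Prod>i=1..s. b i + of_nat N) * (of_nat N + 1))"

lemma hypF_eq_suminf: "hypF r s a b z = (\<Sum>N. hypF_coeff r s a b N * z ^ N)"
  by (simp add: hypF_def hypF_coeff_def)

text \<open>No hypothesis on the \<open>b i\<close> is needed: if some \<open>pochhammer (b i) N\<close> vanishes, both sides
  are \<open>0\<close> because \<open>x / 0 = 0\<close>.\<close>

lemma hypF_coeff_Suc: "hypF_coeff r s a b (Suc N) = hypF_coeff r s a b N * hypF_term_ratio r s a b N"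
  by (simp add: hypF_coeff_def hypF_term_ratio_def pochhammer_Suc prod.distrib
      times_divide_times_eq mult_ac)

lemma hypF_term_ratio_tendsto:
  assumes "r \<le> s + 1"
  shows "hypF_term_ratio r s a b \<longlonglongrightarrow> (if r = s + 1 then 1 else 0)"
proof -
  define e where "e = s + 1 - r"
  have se: "s + 1 = r + e"
    using assms by (simp add: e_def)
  define A where "A N = (\<Prod>i=1..r. (a i + of_nat N) / (of_nat N + 1))" for N
  define B where "B N = (\<Prod>i=1..s. (b i + of_nat N) / (of_nat N + 1))" for N
  have ratio_eq: "hypF_term_ratio r s a b = (\<lambda>N. A N / B N * inverse (of_nat N + 1) ^ e)"
  proof
    fix N
    have "(of_nat N + 1 :: complex) \<noteq> 0"
      by (metis of_nat_Suc of_nat_neq_0 add.commute)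
    then show "hypF_term_ratio r s a b N = A N / B N * inverse (of_nat N + 1) ^ e"
      unfolding hypF_term_ratio_def A_def B_def prod_dividef prod_constant card_atLeastAtMost diff_Suc_1
      by (rule divide_power_cancel[OF _ se, symmetric])
  qed
  have "A \<longlonglongrightarrow> (\<Prod>i=1..r. 1)" and "B \<longlonglongrightarrow> (\<Prod>i=1..s. 1)"
    unfolding A_def[abs_def] B_def[abs_def] by (intro tendsto_prod LIMSEQ_shifted_ratio)+
  then have "(\<lambda>N. A N / B N * inverse (of_nat N + 1) ^ e) \<longlonglongrightarrow> 1 / 1 * 0 ^ e"
    by (intro tendsto_intros LIMSEQ_inverse_of_nat_add_one) simp_all
  moreover have "(0::complex) ^ e = (if r = s + 1 then 1 else 0)"
    using assms by (simp add: e_def)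
  ultimately show ?thesis
    unfolding ratio_eq by simp
qed

lemma summable_hypF_series:
  assumes "r \<le> s + 1" and "r = s + 1 \<Longrightarrow> norm w < 1"
  shows "summable (\<lambda>N. hypF_coeff r s a b N * w ^ N)"
proof (rule summable_ratio_tendsto)
  show "hypF_coeff r s a b (Suc N) * w ^ Suc N = hypF_coeff r s a b N * w ^ N * (hypF_term_ratio r s a b N * w)" for N
    by (simp add: hypF_coeff_Suc mult_ac)
  show "(\<lambda>N. hypF_term_ratio r s a b N * w) \<longlonglongrightarrow> (if r = s + 1 then 1 else 0) * w"
    using assms(1) by (intro tendsto_mult_right hypF_term_ratio_tendsto)
  show "norm ((if r = s + 1 then 1 else 0) * w) < 1"
    using assms(2) by auto
qed

lemma hypF_coeff_nonneg:
  assumes "(\<Prod>i=1..r. pochhammer (a i) N) / (\<Prod>i=1..s. pochhammer (b i) N) \<in> \<real>\<^sub>\<ge>\<^sub>0"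
  shows "hypF_coeff r s a b N \<in> \<real>\<^sub>\<ge>\<^sub>0"
proof -
  have "hypF_coeff r s a b N = (\<Prod>i=1..r. pochhammer (a i) N) / (\<Prod>i=1..s. pochhammer (b i) N) / of_nat (fact N)"
    by (simp add: hypF_coeff_def mult.commute)
  then show ?thesis
    by (simp only:) (intro nonneg_Reals_divide_I assms nonneg_Reals_of_nat_I)
qed

theorem mainTheorem7:
  fixes m n :: nat
    and r s :: "nat \<Rightarrow> nat"
    and a b :: "nat \<Rightarrow> nat \<Rightarrow> complex"
    and z :: "nat \<Rightarrow> nat \<Rightarrow> complex"
  assumes rs: "\<And>l. 1 \<le> l \<Longrightarrow> l \<le> m \<Longrightarrow> r l \<le> s l + 1"
    and bnz: "\<And>l N i. 1 \<le> l \<Longrightarrow> l \<le> m \<Longrightarrow> 1 \<le> i \<Longrightarrow> i \<le> s l \<Longrightarrow>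
                 pochhammer (b i l) N \<noteq> 0"
    and coeff: "\<And>l N. 1 \<le> l \<Longrightarrow> l \<le> m \<Longrightarrow>
                 nonneg_complex ((\<Prod>i=1..r l. pochhammer (a i l) N) / (\<Prod>i=1..s l. pochhammer (b i l) N))"
    and zbd: "\<And>l j. 1 \<le> l \<Longrightarrow> l \<le> m \<Longrightarrow> s l + 1 = r l \<Longrightarrow> 1 \<le> j \<Longrightarrow> j \<le> n \<Longrightarrow>
                 norm (z j l) < 1"
  shows "psd_matrix n (\<lambda>j k. \<Prod>l=1..m. hypF (r l) (s l) (\<lambda>i. a i l) (\<lambda>i. b i l) (z j l * cnj (z k l)))"
proof (rule psd_matrix_limit)
  define d where "d l = hypF_coeff (r l) (s l) (\<lambda>i. a i l) (\<lambda>i. b i l)" for l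
  show "psd_matrix n (\<lambda>j k. \<Prod>l\<in>{1..m}. \<Sum>N<M. d l N * (z j l * cnj (z k l)) ^ N)" for M
    using coeff unfolding d_def
    by (intro psd_matrix_prod_partial_sums hypF_coeff_nonneg) (auto simp: nonneg_complex_iff_nonneg_Reals)
  show "(\<lambda>M. \<Prod>l\<in>{1..m}. \<Sum>N<M. d l N * (z j l * cnj (z k l)) ^ N)
      \<longlonglongrightarrow> (\<Prod>l=1..m. hypF (r l) (s l) (\<lambda>i. a i l) (\<lambda>i. b i l) (z j l * cnj (z k l)))"
    if "j \<in> {1..n}" and "k \<in> {1..n}" for j k
    unfolding hypF_eq_suminf d_def
  proof (intro tendsto_prod summable_LIMSEQ summable_hypF_series)
    fix l assume l: "l \<in> {1..m}"
    then show "r l \<le> s l + 1"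
      using rs by simp
    assume "r l = s l + 1"
    then have "norm (z j l) < 1" and "norm (z k l) < 1"
      using zbd l that by auto
    then have "norm (z j l) * norm (z k l) < 1 * 1"
      by (intro mult_strict_mono') simp_all
    then show "norm (z j l * cnj (z k l)) < 1"
      by (simp add: norm_mult)
  qed
qed

end
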